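(* Let $\delta,\varepsilon\in[0,1)$, let $\mathscr{H}$ be a complex Hilbert space, let $\mathscr{A}$ be a $C^*$-algebra with $\mathbb{K}(\mathscr{H})\subseteq\mathscr{A}\subseteq\mathbb{B}(\mathscr{H})$, let $\mathscr{E},\mathscr{F}$ be inner product $\mathscr{A}$-modules, and let $e=\eta\otimes\eta$ be a minimal projection ($\eta\in\mathscr{H}$ a unit vector). Then: (i) $x,y\in\mathscr{E}_e$ are $\delta$-orthogonal in the inner product space $\mathscr{E}_e$ if and only if they are $\delta$-orthogonal in $\mathscr{E}$; (ii) if $T:\mathscr{E}\to\mathscr{F}$ is an $\mathscr{A}$-linear $(\delta,\varepsilon)$-orthogonality preserving mapping, then $T$ maps $\mathscr{E}_e$ into $\mathscr{F}_e$ and its restriction $T_e:\mathscr{E}_e\to\mathscr{F}_e$ is a linear $(\delta,\varepsilon)$-orthogonality preserving mapping between inner product spaces.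
   Context: An inner product $\mathscr{A}$-module is a right $\mathscr{A}$-module with an $\mathscr{A}$-valued inner product $\langle\cdot,\cdot\rangle$ ($\mathbb{C}$-linear and $\mathscr{A}$-linear in the second variable, $\langle x,y\rangle^*=\langle y,x\rangle$, $\langle x,x\rangle\geq0$ with equality iff $x=0$), with norm $\|x\|=\|\langle x,x\rangle\|^{1/2}$. A map is $\mathscr{A}$-linear if it is linear and $T(xa)=(Tx)a$. For $\eta,\zeta\in\mathscr{H}$, $\eta\otimes\zeta$ is the rank-one operator $\xi\mapsto(\xi,\zeta)\eta$. For a minimal projection $e=\eta\otimes\eta$, $\mathscr{E}_e=\{xe:x\in\mathscr{E}\}$ is a complex inner product space with inner product $(x,y)=\mathrm{tr}(\langle x,y\rangle)$; one has $\langle x,y\rangle=(x,y)e$ for $x,y\in\mathscr{E}_e$. In an inner product space, $x,y$ are $\delta$-orthogonal if $|(x,y)|\leq\delta\|x\|\|y\|$; in $\mathscr{E}$, if $\|\langle x,y\rangle\|\leq\delta\|x\|\|y\|$. A map is $(\delta,\varepsilon)$-orthogonality preserving if $\delta$-orthogonal pairs are mapped to $\varepsilon$-orthogonal pairs. *)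

theory Defs
  imports "HOL-Analysis.Analysis"
begin

text \<open>
  A complex Hilbert space is modelled on a type 'h with an additive group structure,
  an explicit complex scalar multiplication sc and a complex inner product ip which is
  linear in the FIRST argument and conjugate-linear in the second (the paper's convention:
  the rank-one operator eta (x) zeta maps xi to (xi,zeta) eta).
\<close>

definition hnorm :: "('h \<Rightarrow> 'h \<Rightarrow> complex) \<Rightarrow> 'h \<Rightarrow> real" where
  "hnorm ip x = sqrt (Re (ip x x))"

locale complex_hilbert_space =
  fixes sc :: "complex \<Rightarrow> 'h::ab_group_add \<Rightarrow> 'h"
    and ip :: "'h \<Rightarrow> 'h \<Rightarrow> complex"
  assumes sc_add_right: "sc c (x + y) = sc c x + sc c y"
    and sc_add_left: "sc (c + d) x = sc c x + sc d x"
    and sc_assoc: "sc c (sc d x) = sc (c * d) x"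
    and sc_one: "sc 1 x = x"
    and ip_add_left: "ip (x + y) z = ip x z + ip y z"
    and ip_sc_left: "ip (sc c x) y = c * ip x y"
    and ip_conj_sym: "ip y x = cnj (ip x y)"
    and ip_nonneg: "Re (ip x x) \<ge> 0"
    and ip_definite: "ip x x = 0 \<Longrightarrow> x = 0"
    and complete: "(\<forall>r>0. \<exists>N::nat. \<forall>m\<ge>N. \<forall>n\<ge>N. hnorm ip ((X::nat\<Rightarrow>'h) m - X n) < r)
                   \<Longrightarrow> (\<exists>L. \<forall>r>0. \<exists>N. \<forall>n\<ge>N. hnorm ip (X n - L) < r)"

definition bounded_op :: "(complex \<Rightarrow> 'h::ab_group_add \<Rightarrow> 'h) \<Rightarrow> ('h \<Rightarrow> 'h \<Rightarrow> complex) \<Rightarrow> ('h \<Rightarrow> 'h) \<Rightarrow> bool" where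
  "bounded_op sc ip T \<longleftrightarrow>
     (\<forall>x y. T (x + y) = T x + T y) \<and> (\<forall>c x. T (sc c x) = sc c (T x)) \<and>
     (\<exists>K. \<forall>x. hnorm ip (T x) \<le> K * hnorm ip x)"

definition op_norm :: "('h \<Rightarrow> 'h \<Rightarrow> complex) \<Rightarrow> ('h \<Rightarrow> 'h) \<Rightarrow> real" where
  "op_norm ip T = Sup {hnorm ip (T x) | x. hnorm ip x \<le> 1}"

definition adjoint :: "('h \<Rightarrow> 'h \<Rightarrow> complex) \<Rightarrow> ('h \<Rightarrow> 'h) \<Rightarrow> ('h \<Rightarrow> 'h)" where
  "adjoint ip T = (\<lambda>y. THE z. \<forall>x. ip (T x) y = ip x z)"

definition compact_op :: "(complex \<Rightarrow> 'h::ab_group_add \<Rightarrow> 'h) \<Rightarrow> ('h \<Rightarrow> 'h \<Rightarrow> complex) \<Rightarrow> ('h \<Rightarrow> 'h) \<Rightarrow> bool" where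
  "compact_op sc ip T \<longleftrightarrow> bounded_op sc ip T \<and>
     (\<forall>X::nat\<Rightarrow>'h. (\<exists>B. \<forall>n. hnorm ip (X n) \<le> B) \<longrightarrow>
        (\<exists>(r::nat\<Rightarrow>nat) L. strict_mono r \<and> (\<forall>\<epsilon>>0. \<exists>N. \<forall>n\<ge>N. hnorm ip (T (X (r n)) - L) < \<epsilon>)))"

definition cstar_algebra_between :: "(complex \<Rightarrow> 'h::ab_group_add \<Rightarrow> 'h) \<Rightarrow> ('h \<Rightarrow> 'h \<Rightarrow> complex) \<Rightarrow> ('h \<Rightarrow> 'h) set \<Rightarrow> bool" where
  "cstar_algebra_between sc ip A \<longleftrightarrow>
     {T. compact_op sc ip T} \<subseteq> A \<and> A \<subseteq> {T. bounded_op sc ip T} \<and>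
     (\<forall>a\<in>A. \<forall>b\<in>A. (\<lambda>x. a x + b x) \<in> A) \<and>
     (\<forall>a\<in>A. \<forall>c. (\<lambda>x. sc c (a x)) \<in> A) \<and>
     (\<forall>a\<in>A. \<forall>b\<in>A. a \<circ> b \<in> A) \<and>
     (\<forall>a\<in>A. adjoint ip a \<in> A) \<and>
     (\<forall>(X::nat\<Rightarrow>'h\<Rightarrow>'h) T. (\<forall>n. X n \<in> A) \<and> bounded_op sc ip T \<and>
            (\<lambda>n. op_norm ip (\<lambda>x. X n x - T x)) \<longlonglongrightarrow> 0 \<longrightarrow> T \<in> A)"

definition pos_op :: "('h \<Rightarrow> 'h \<Rightarrow> complex) \<Rightarrow> ('h \<Rightarrow> 'h) \<Rightarrow> bool" where
  "pos_op ip a \<longleftrightarrow> (\<forall>\<xi>. Im (ip (a \<xi>) \<xi>) = 0 \<and> Re (ip (a \<xi>) \<xi>) \<ge> 0)"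

definition inner_product_module ::
  "(complex \<Rightarrow> 'h::ab_group_add \<Rightarrow> 'h) \<Rightarrow> ('h \<Rightarrow> 'h \<Rightarrow> complex) \<Rightarrow> ('h \<Rightarrow> 'h) set \<Rightarrow>
   (complex \<Rightarrow> 'e::ab_group_add \<Rightarrow> 'e) \<Rightarrow> ('e \<Rightarrow> ('h \<Rightarrow> 'h) \<Rightarrow> 'e) \<Rightarrow> ('e \<Rightarrow> 'e \<Rightarrow> ('h \<Rightarrow> 'h)) \<Rightarrow> bool" where
  "inner_product_module sc ip A scE act ipE \<longleftrightarrow>
     \<comment> \<open>complex vector space\<close>
     (\<forall>c x y. scE c (x + y) = scE c x + scE c y) \<and>
     (\<forall>c d x. scE (c + d) x = scE c x + scE d x) \<and>
     (\<forall>c d x. scE c (scE d x) = scE (c * d) x) \<and>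
     (\<forall>x. scE 1 x = x) \<and>
     \<comment> \<open>right A-module, compatible with scalars\<close>
     (\<forall>a\<in>A. \<forall>x y. act (x + y) a = act x a + act y a) \<and>
     (\<forall>a\<in>A. \<forall>b\<in>A. \<forall>x. act x (\<lambda>\<xi>. a \<xi> + b \<xi>) = act x a + act x b) \<and>
     (\<forall>a\<in>A. \<forall>b\<in>A. \<forall>x. act x (a \<circ> b) = act (act x a) b) \<and>
     (\<forall>a\<in>A. \<forall>c x. scE c (act x a) = act (scE c x) a) \<and>
     (\<forall>a\<in>A. \<forall>c x. act x (\<lambda>\<xi>. sc c (a \<xi>)) = act (scE c x) a) \<and>
     \<comment> \<open>A-valued inner product\<close>
     (\<forall>x y. ipE x y \<in> A) \<and>
     (\<forall>x y z. ipE x (y + z) = (\<lambda>\<xi>. ipE x y \<xi> + ipE x z \<xi>)) \<and>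
     (\<forall>c x y. ipE x (scE c y) = (\<lambda>\<xi>. sc c (ipE x y \<xi>))) \<and>
     (\<forall>a\<in>A. \<forall>x y. ipE x (act y a) = ipE x y \<circ> a) \<and>
     (\<forall>x y. adjoint ip (ipE x y) = ipE y x) \<and>
     (\<forall>x. pos_op ip (ipE x x)) \<and>
     (\<forall>x. ipE x x = (\<lambda>\<xi>. 0) \<longleftrightarrow> x = 0)"

definition mod_norm :: "('h \<Rightarrow> 'h \<Rightarrow> complex) \<Rightarrow> ('e \<Rightarrow> 'e \<Rightarrow> ('h \<Rightarrow> 'h)) \<Rightarrow> 'e \<Rightarrow> real" where
  "mod_norm ip ipE x = sqrt (op_norm ip (ipE x x))"

definition rank_one :: "(complex \<Rightarrow> 'h \<Rightarrow> 'h) \<Rightarrow> ('h \<Rightarrow> 'h \<Rightarrow> complex) \<Rightarrow> 'h \<Rightarrow> 'h \<Rightarrow> ('h \<Rightarrow> 'h)" where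
  "rank_one sc ip \<eta> \<zeta> = (\<lambda>\<xi>. sc (ip \<xi> \<zeta>) \<eta>)"

definition orthonormal_basis :: "('h::zero \<Rightarrow> 'h \<Rightarrow> complex) \<Rightarrow> 'h set \<Rightarrow> bool" where
  "orthonormal_basis ip B \<longleftrightarrow>
     (\<forall>u\<in>B. ip u u = 1) \<and> (\<forall>u\<in>B. \<forall>v\<in>B. u \<noteq> v \<longrightarrow> ip u v = 0) \<and>
     (\<forall>x. (\<forall>u\<in>B. ip x u = 0) \<longrightarrow> x = 0)"

definition trace :: "('h::zero \<Rightarrow> 'h \<Rightarrow> complex) \<Rightarrow> ('h \<Rightarrow> 'h) \<Rightarrow> complex" where
  "trace ip a = infsum (\<lambda>u. ip (a u) u) (SOME B. orthonormal_basis ip B)"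

definition cut_space :: "('e \<Rightarrow> ('h \<Rightarrow> 'h) \<Rightarrow> 'e) \<Rightarrow> ('h \<Rightarrow> 'h) \<Rightarrow> 'e set" where
  "cut_space act e = {act x e | x. True}"

definition cut_ip :: "('h::zero \<Rightarrow> 'h \<Rightarrow> complex) \<Rightarrow> ('e \<Rightarrow> 'e \<Rightarrow> ('h \<Rightarrow> 'h)) \<Rightarrow> 'e \<Rightarrow> 'e \<Rightarrow> complex" where
  "cut_ip ip ipE x y = trace ip (ipE x y)"

definition cut_norm :: "('h::zero \<Rightarrow> 'h \<Rightarrow> complex) \<Rightarrow> ('e \<Rightarrow> 'e \<Rightarrow> ('h \<Rightarrow> 'h)) \<Rightarrow> 'e \<Rightarrow> real" where
  "cut_norm ip ipE x = sqrt (Re (cut_ip ip ipE x x))"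

definition space_orth :: "('h::zero \<Rightarrow> 'h \<Rightarrow> complex) \<Rightarrow> ('e \<Rightarrow> 'e \<Rightarrow> ('h \<Rightarrow> 'h)) \<Rightarrow> real \<Rightarrow> 'e \<Rightarrow> 'e \<Rightarrow> bool" where
  "space_orth ip ipE \<delta> x y \<longleftrightarrow>
     cmod (cut_ip ip ipE x y) \<le> \<delta> * cut_norm ip ipE x * cut_norm ip ipE y"

definition module_orth :: "('h \<Rightarrow> 'h \<Rightarrow> complex) \<Rightarrow> ('e \<Rightarrow> 'e \<Rightarrow> ('h \<Rightarrow> 'h)) \<Rightarrow> real \<Rightarrow> 'e \<Rightarrow> 'e \<Rightarrow> bool" where
  "module_orth ip ipE \<delta> x y \<longleftrightarrow>
     op_norm ip (ipE x y) \<le> \<delta> * mod_norm ip ipE x * mod_norm ip ipE y"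

end

theory Submission
  imports Defs
begin

text \<open>
  For x, y in E_e the module inner product is a scalar multiple of the projection:
  \<langle>x, y\<rangle> = \<lambda> e. The operator norm of \<lambda> e is |\<lambda>| and its trace is \<lambda> tr e, so the inner product
  space data of E_e are those of E multiplied by the positive constant tr e, which cancels
  from both sides of the \<delta>-orthogonality inequality. For (ii), an A-linear map satisfies
  T (x e) = (T x) e, so it maps E_e into F_e, and (i) transfers the orthogonality condition.
\<close>

context complex_hilbert_space
begin

lemma sc_diff_left: "sc (c - d) x = sc c x - sc d x"
  using sc_add_left[of "c - d" d x] by (simp add: eq_diff_eq)

lemma ip_zero_left [simp]: "ip 0 z = 0"
  using ip_add_left[of 0 0 z] by simp

lemma ip_minus_left: "ip (- x) z = - ip x z"
  using ip_add_left[of x "- x" z] by (simp add: add_eq_0_iff2)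

lemma ip_diff_left: "ip (x - y) z = ip x z - ip y z"
  using ip_add_left[of x "- y" z] ip_minus_left by simp

lemma ip_diff_right: "ip z (x - y) = ip z x - ip z y"
  by (metis ip_diff_left ip_conj_sym complex_cnj_diff)

lemma ip_sc_right: "ip x (sc c y) = cnj c * ip x y"
  by (metis ip_sc_left ip_conj_sym complex_cnj_mult)

lemma ip_sum_left: "ip (sum f F) z = (\<Sum>u\<in>F. ip (f u) z)"
  by (induction F rule: infinite_finite_induct) (auto simp: ip_add_left)

lemma ip_self_real: "ip x x = complex_of_real (Re (ip x x))"
  by (metis Reals_cnj_iff complex_is_Real_iff ip_conj_sym of_real_Re)

lemma hnorm_sc: "hnorm ip (sc c x) = cmod c * hnorm ip x"
proof -
  have "ip (sc c x) (sc c x) = c * cnj c * ip x x"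
    by (simp add: ip_sc_left ip_sc_right)
  also have "\<dots> = complex_of_real ((cmod c)\<^sup>2 * Re (ip x x))"
    by (subst ip_self_real) (simp add: complex_norm_square[symmetric])
  finally show ?thesis
    unfolding hnorm_def by (simp add: real_sqrt_mult)
qed

lemma ip_right_eqI: "(\<And>\<xi>. ip \<xi> z = ip \<xi> z') \<Longrightarrow> z = z'"
  using ip_definite[of "z - z'"] by (simp add: ip_diff_right)

lemma adjoint_eqI:
  assumes "\<And>\<xi> w. ip (T \<xi>) w = ip \<xi> (S w)"
  shows "adjoint ip T = S"
proof
  fix w
  show "adjoint ip T w = S w"
    unfolding adjoint_def by (rule the_equality) (use assms ip_right_eqI in metis)+
qed

lemma bessel_inequality:
  assumes "finite F" and "\<forall>u\<in>F. ip u u = 1" and "\<forall>u\<in>F. \<forall>v\<in>F. u \<noteq> v \<longrightarrow> ip u v = 0"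
  shows "(\<Sum>u\<in>F. (cmod (ip \<xi> u))\<^sup>2) \<le> Re (ip \<xi> \<xi>)"
proof -
  define c where "c u = ip \<xi> u" for u
  define p where "p = (\<Sum>u\<in>F. sc (c u) u)"
  define S where "S = (\<Sum>u\<in>F. (cmod (c u))\<^sup>2)"
  have ip_p: "ip p z = (\<Sum>u\<in>F. c u * ip u z)" for z
    unfolding p_def by (simp add: ip_sum_left ip_sc_left)
  have c_sq: "c u * cnj (c u) = complex_of_real ((cmod (c u))\<^sup>2)" for u
    by (simp add: complex_norm_square[symmetric])
  have p_coeff: "ip p v = c v" if "v \<in> F" for v
  proof -
    have "ip p v = (\<Sum>u\<in>F. if u = v then c v else 0)"
      unfolding ip_p by (rule sum.cong) (use assms that in auto)
    then show ?thesis using assms that by simp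
  qed
  have "ip p p = complex_of_real S"
    unfolding ip_p[of p] S_def of_real_sum
    by (rule sum.cong) (use p_coeff c_sq ip_conj_sym in metis)+
  moreover have p_\<xi>: "ip p \<xi> = complex_of_real S"
    unfolding ip_p[of \<xi>] S_def of_real_sum
    by (rule sum.cong) (use c_sq ip_conj_sym c_def in metis)+
  moreover have "ip \<xi> p = complex_of_real S"
    using p_\<xi> by (metis ip_conj_sym complex_cnj_complex_of_real)
  ultimately have "ip (\<xi> - p) (\<xi> - p) = ip \<xi> \<xi> - complex_of_real S"
    by (simp add: ip_diff_left ip_diff_right)
  then have "0 \<le> Re (ip \<xi> \<xi>) - S"
    using ip_nonneg[of "\<xi> - p"] by simp
  then show ?thesis by (simp add: S_def c_def)
qed

lemma norm_ip_unit_le: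
  assumes "ip \<eta> \<eta> = 1"
  shows "cmod (ip \<xi> \<eta>) \<le> hnorm ip \<xi>"
proof -
  have "(\<Sum>u\<in>{\<eta>}. (cmod (ip \<xi> u))\<^sup>2) \<le> Re (ip \<xi> \<xi>)"
    by (rule bessel_inequality) (use assms in auto)
  then show ?thesis
    unfolding hnorm_def by (simp add: real_le_rsqrt)
qed

lemma exists_unit_orthogonal:
  assumes "x \<noteq> 0"
  shows "\<exists>v. ip v v = 1 \<and> (\<forall>u. ip x u = 0 \<longrightarrow> ip v u = 0)"
proof -
  define n where "n = Re (ip x x)"
  have n: "ip x x = complex_of_real n"
    unfolding n_def by (rule ip_self_real)
  have "n > 0"
    using ip_nonneg[of x] ip_definite[of x] n assms
    unfolding n_def by (metis less_eq_real_def of_real_0)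
  define v where "v = sc (complex_of_real (1 / sqrt n)) x"
  have "ip v v = complex_of_real ((1 / sqrt n) * (1 / sqrt n) * n)"
    by (simp only: v_def ip_sc_left ip_sc_right n complex_cnj_complex_of_real of_real_mult mult.assoc)
  also have "(1 / sqrt n) * (1 / sqrt n) * n = 1"
    using \<open>n > 0\<close> by (simp add: field_simps)
  finally show ?thesis
    by (intro exI[of _ v]) (simp add: v_def ip_sc_left)
qed

lemma orthonormal_basis_exists: "\<exists>B. orthonormal_basis ip B"
proof -
  define OS where "OS = {B. (\<forall>u\<in>B. ip u u = 1) \<and> (\<forall>u\<in>B. \<forall>v\<in>B. u \<noteq> v \<longrightarrow> ip u v = 0)}"
  have "\<Union>C \<in> OS" if C: "C \<in> chains OS" for C
  proof -
    have sub: "C \<subseteq> OS" and chain: "\<forall>X\<in>C. \<forall>Y\<in>C. X \<subseteq> Y \<or> Y \<subseteq> X"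
      using C unfolding chains_def chain_subset_def by blast+
    have "ip u v = 0" if uv: "u \<in> \<Union>C" "v \<in> \<Union>C" "u \<noteq> v" for u v
    proof -
      obtain X Y where "X \<in> C" "Y \<in> C" "u \<in> X" "v \<in> Y"
        using uv by blast
      then obtain Z where "Z \<in> OS" "u \<in> Z" "v \<in> Z"
        using chain sub by blast
      with \<open>u \<noteq> v\<close> show ?thesis
        unfolding OS_def by blast
    qed
    moreover have "ip u u = 1" if "u \<in> \<Union>C" for u
      using that sub unfolding OS_def by blast
    ultimately show ?thesis
      unfolding OS_def by blast
  qed
  then obtain M where M: "M \<in> OS" and max: "\<forall>X\<in>OS. M \<subseteq> X \<longrightarrow> X = M"
    using Zorn_Lemma by blast
  have complete: "x = 0" if x: "\<forall>u\<in>M. ip x u = 0" for x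
  proof (rule ccontr)
    assume "x \<noteq> 0"
    then obtain v where vv: "ip v v = 1" and vM: "\<forall>u\<in>M. ip v u = 0"
      using exists_unit_orthogonal x by blast
    have "ip u v = 0" if "u \<in> M" for u
      using vM that by (metis ip_conj_sym complex_cnj_zero)
    with M vv vM have "insert v M \<in> OS"
      unfolding OS_def by auto
    moreover have "v \<notin> M"
      using vv vM by fastforce
    ultimately show False
      using max by blast
  qed
  have "orthonormal_basis ip M"
    using M complete unfolding orthonormal_basis_def OS_def by blast
  then show ?thesis ..
qed

end

lemma cstar_algebra_betweenD:
  assumes "cstar_algebra_between sc ip A"
  shows "{T. compact_op sc ip T} \<subseteq> A" and "A \<subseteq> {T. bounded_op sc ip T}"
  using assms unfolding cstar_algebra_between_def by auto

lemma inner_product_moduleD: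
  assumes "inner_product_module sc ip A scE act ipE"
  shows "ipE x y \<in> A" and "a \<in> A \<Longrightarrow> ipE x (act y a) = ipE x y \<circ> a"
    and "adjoint ip (ipE x y) = ipE y x" and "pos_op ip (ipE x x)"
  using assms unfolding inner_product_module_def by blast+

lemma bounded_op_sc: "bounded_op sc ip T \<Longrightarrow> T (sc c x) = sc c (T x)"
  unfolding bounded_op_def by blast

locale hilbert_unit_vector = complex_hilbert_space +
  fixes \<eta> :: "'h::ab_group_add"
  assumes unit: "ip \<eta> \<eta> = 1"
begin

abbreviation proj :: "'h \<Rightarrow> 'h" where
  "proj \<equiv> rank_one sc ip \<eta> \<eta>"

lemma hnorm_unit [simp]: "hnorm ip \<eta> = 1"
  by (simp add: hnorm_def unit)

lemma bounded_op_proj: "bounded_op sc ip proj"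
  unfolding bounded_op_def rank_one_def
proof (intro conjI allI exI)
  fix x y
  show "sc (ip (x + y) \<eta>) \<eta> = sc (ip x \<eta>) \<eta> + sc (ip y \<eta>) \<eta>"
    by (simp add: ip_add_left sc_add_left)
next
  fix c x
  show "sc (ip (sc c x) \<eta>) \<eta> = sc c (sc (ip x \<eta>) \<eta>)"
    by (simp add: ip_sc_left sc_assoc)
next
  fix x
  show "hnorm ip (sc (ip x \<eta>) \<eta>) \<le> 1 * hnorm ip x"
    using norm_ip_unit_le[OF unit, of x] by (simp add: hnorm_sc)
qed

lemma compact_op_proj: "compact_op sc ip proj"
  unfolding compact_op_def
proof (intro conjI bounded_op_proj allI impI)
  fix X :: "nat \<Rightarrow> 'h"
  assume "\<exists>B. \<forall>n. hnorm ip (X n) \<le> B"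
  then obtain B where B: "\<And>n. hnorm ip (X n) \<le> B" by blast
  define f where "f n = ip (X n) \<eta>" for n
  have "bounded (range f)"
    by (rule boundedI[of _ B]) (use B norm_ip_unit_le[OF unit] order_trans in \<open>fastforce simp: f_def\<close>)
  then obtain l r where r: "strict_mono (r :: nat \<Rightarrow> nat)" and l: "(f \<circ> r) \<longlonglongrightarrow> l"
    using bounded_imp_convergent_subsequence by blast
  have dist: "hnorm ip (proj (X (r n)) - sc l \<eta>) = norm ((f \<circ> r) n - l)" for n
    by (simp add: rank_one_def f_def sc_diff_left[symmetric] hnorm_sc)
  have "\<forall>\<epsilon>>0. \<exists>N. \<forall>n\<ge>N. hnorm ip (proj (X (r n)) - sc l \<eta>) < \<epsilon>"
    unfolding dist using LIMSEQ_D[OF l] by blast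
  with r show "\<exists>(r :: nat \<Rightarrow> nat) L. strict_mono r \<and> (\<forall>\<epsilon>>0. \<exists>N. \<forall>n\<ge>N. hnorm ip (proj (X (r n)) - L) < \<epsilon>)"
    by blast
qed

lemma op_norm_proj_mult: "op_norm ip (\<lambda>\<xi>. sc (\<mu> * ip \<xi> \<eta>) \<eta>) = cmod \<mu>"
  unfolding op_norm_def
proof (rule cSup_eq_maximum)
  show "cmod \<mu> \<in> {hnorm ip (sc (\<mu> * ip x \<eta>) \<eta>) | x. hnorm ip x \<le> 1}"
    using unit by (auto simp: hnorm_sc intro!: exI[of _ \<eta>])
next
  fix y
  assume "y \<in> {hnorm ip (sc (\<mu> * ip x \<eta>) \<eta>) | x. hnorm ip x \<le> 1}"
  then obtain x where y: "y = cmod \<mu> * cmod (ip x \<eta>)" and x: "hnorm ip x \<le> 1"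
    by (auto simp: hnorm_sc norm_mult)
  have "cmod (ip x \<eta>) \<le> 1"
    using norm_ip_unit_le[OF unit, of x] x by simp
  then show "y \<le> cmod \<mu>"
    unfolding y by (simp add: mult_left_le)
qed

text \<open>
  The trace is taken along an unspecified orthonormal basis, so we do not compute tr e = 1
  (which would need Parseval's identity); positivity of tr e suffices, and it holds because
  \<eta> has a nonzero coefficient in every orthonormal basis.
\<close>

lemma trace_proj_mult: "\<exists>t>0. \<forall>\<mu>. trace ip (\<lambda>\<xi>. sc (\<mu> * ip \<xi> \<eta>) \<eta>) = \<mu> * complex_of_real t"
proof -
  define B where "B = (SOME B. orthonormal_basis ip B)"
  have onb: "orthonormal_basis ip B"
    unfolding B_def using orthonormal_basis_exists by (rule someI_ex)
  define g where "g u = (cmod (ip \<eta> u))\<^sup>2" for u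
  have g_summable: "g summable_on B"
  proof (rule nonneg_bdd_above_summable_on)
    show "bdd_above (sum g ` {F. F \<subseteq> B \<and> finite F})"
    proof (rule bdd_aboveI)
      fix s
      assume "s \<in> sum g ` {F. F \<subseteq> B \<and> finite F}"
      then obtain F where F: "F \<subseteq> B" "finite F" and s: "s = sum g F" by blast
      have "sum g F \<le> Re (ip \<eta> \<eta>)"
        unfolding g_def
        by (rule bessel_inequality) (use F onb in \<open>auto simp: orthonormal_basis_def subset_iff\<close>)
      then show "s \<le> 1" using s unit by simp
    qed
  qed (simp add: g_def)
  define t where "t = infsum g B"
  have "\<eta> \<noteq> 0" using unit by auto
  then obtain u0 where u0: "u0 \<in> B" "ip \<eta> u0 \<noteq> 0"
    using onb unfolding orthonormal_basis_def by blast
  have "infsum g {u0} \<le> t"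
    unfolding t_def by (rule infsum_mono_neutral) (use g_summable u0 in \<open>auto simp: g_def\<close>)
  moreover have "0 < g u0" using u0 by (simp add: g_def)
  ultimately have "t > 0" by simp
  have diag: "ip (sc (\<mu> * ip u \<eta>) \<eta>) u = \<mu> * complex_of_real (g u)" for \<mu> u
  proof -
    have "ip (sc (\<mu> * ip u \<eta>) \<eta>) u = \<mu> * (ip \<eta> u * cnj (ip \<eta> u))"
      by (simp add: ip_sc_left ip_conj_sym[of u \<eta>])
    then show ?thesis
      unfolding g_def by (simp only: complex_norm_square)
  qed
  have "((\<lambda>u. complex_of_real (g u)) has_sum complex_of_real t) B"
    unfolding t_def by (rule has_sum_of_real) (use g_summable in simp)
  then have "trace ip (\<lambda>\<xi>. sc (\<mu> * ip \<xi> \<eta>) \<eta>) = \<mu> * complex_of_real t" for \<mu>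
    unfolding trace_def B_def[symmetric] diag infsum_cmult_right' by (simp add: infsumI)
  with \<open>t > 0\<close> show ?thesis by blast
qed

lemma pos_op_proj_multD:
  assumes "pos_op ip (\<lambda>\<xi>. sc (\<mu> * ip \<xi> \<eta>) \<eta>)"
  shows "\<mu> = complex_of_real (Re \<mu>)" and "Re \<mu> \<ge> 0"
  using assms[unfolded pos_op_def, rule_format, of \<eta>] unit
  by (simp_all add: ip_sc_left complex_eq_iff)

context
  fixes A :: "('h \<Rightarrow> 'h) set"
    and scE :: "complex \<Rightarrow> 'e::ab_group_add \<Rightarrow> 'e" and act :: "'e \<Rightarrow> ('h \<Rightarrow> 'h) \<Rightarrow> 'e"
    and ipE :: "'e \<Rightarrow> 'e \<Rightarrow> ('h \<Rightarrow> 'h)"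
  assumes A: "cstar_algebra_between sc ip A"
    and M: "inner_product_module sc ip A scE act ipE"
begin

lemma proj_in_algebra: "proj \<in> A"
  using compact_op_proj cstar_algebra_betweenD(1)[OF A] by blast

text \<open>\<langle>x e, y e\<rangle> = (\<langle>y, x\<rangle> e)* e, and (b e)* e = (\<eta>, b \<eta>) e for every operator b.\<close>

lemma ip_cut_space:
  "ipE (act x proj) (act y proj) = (\<lambda>\<xi>. sc (ip \<eta> (ipE y x \<eta>) * ip \<xi> \<eta>) \<eta>)"
proof -
  define b where "b = ipE y x"
  have b_sc: "b (sc c z) = sc c (b z)" for c z
    using inner_product_moduleD(1)[OF M] cstar_algebra_betweenD(2)[OF A] bounded_op_sc
    unfolding b_def by blast
  have adjoint_b_proj: "adjoint ip (b \<circ> proj) = (\<lambda>w. sc (ip w (b \<eta>)) \<eta>)"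
    by (rule adjoint_eqI)
      (simp add: rank_one_def b_sc ip_sc_left ip_sc_right ip_conj_sym[of _ "b \<eta>"])
  have "ipE (act x proj) (act y proj) = ipE (act x proj) y \<circ> proj"
    by (rule inner_product_moduleD(2)[OF M proj_in_algebra])
  also have "ipE (act x proj) y = adjoint ip (ipE y (act x proj))"
    by (simp only: inner_product_moduleD(3)[OF M])
  also have "ipE y (act x proj) = b \<circ> proj"
    unfolding b_def by (rule inner_product_moduleD(2)[OF M proj_in_algebra])
  also note adjoint_b_proj
  finally show ?thesis
    by (simp add: fun_eq_iff rank_one_def ip_sc_left b_def mult.commute)
qed

lemma space_orth_iff_module_orth:
  assumes x: "x \<in> cut_space act proj" and y: "y \<in> cut_space act proj"
  shows "space_orth ip ipE \<delta> x y \<longleftrightarrow> module_orth ip ipE \<delta> x y"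
proof -
  obtain t where "t > 0" and tr: "\<And>\<mu>. trace ip (\<lambda>\<xi>. sc (\<mu> * ip \<xi> \<eta>) \<eta>) = \<mu> * complex_of_real t"
    using trace_proj_mult by blast
  obtain x0 y0 where x0: "x = act x0 proj" and y0: "y = act y0 proj"
    using x y unfolding cut_space_def by blast
  define m where "m u v = ip \<eta> (ipE v u \<eta>)" for u v
  have ipE_xy: "ipE x y = (\<lambda>\<xi>. sc (m x0 y0 * ip \<xi> \<eta>) \<eta>)"
    and ipE_xx: "ipE x x = (\<lambda>\<xi>. sc (m x0 x0 * ip \<xi> \<eta>) \<eta>)"
    and ipE_yy: "ipE y y = (\<lambda>\<xi>. sc (m y0 y0 * ip \<xi> \<eta>) \<eta>)"
    unfolding x0 y0 m_def ip_cut_space by simp_all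
  define a b where "a = Re (m x0 x0)" and "b = Re (m y0 y0)"
  have a: "m x0 x0 = complex_of_real a" "a \<ge> 0"
    using pos_op_proj_multD inner_product_moduleD(4)[OF M, of x] unfolding ipE_xx a_def by auto
  have b: "m y0 y0 = complex_of_real b" "b \<ge> 0"
    using pos_op_proj_multD inner_product_moduleD(4)[OF M, of y] unfolding ipE_yy b_def by auto
  have "sqrt (a * t) * sqrt (b * t) = sqrt a * sqrt b * t"
    using \<open>t > 0\<close> by (simp add: real_sqrt_mult algebra_simps)
  then have "space_orth ip ipE \<delta> x y \<longleftrightarrow> cmod (m x0 y0) * t \<le> \<delta> * (sqrt a * sqrt b) * t"
    unfolding space_orth_def cut_norm_def cut_ip_def ipE_xy ipE_xx ipE_yy tr a(1) b(1)
    using \<open>t > 0\<close> by (simp add: norm_mult mult.assoc)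
  also have "\<dots> \<longleftrightarrow> cmod (m x0 y0) \<le> \<delta> * (sqrt a * sqrt b)"
    using \<open>t > 0\<close> by simp
  also have "\<dots> \<longleftrightarrow> module_orth ip ipE \<delta> x y"
    unfolding module_orth_def mod_norm_def ipE_xy ipE_xx ipE_yy op_norm_proj_mult a(1) b(1)
    using a(2) b(2) by (simp add: mult.assoc)
  finally show ?thesis .
qed

end

end

theorem lemma3p4:
  fixes sc :: "complex \<Rightarrow> 'h::ab_group_add \<Rightarrow> 'h" and ip :: "'h \<Rightarrow> 'h \<Rightarrow> complex"
    and A :: "('h \<Rightarrow> 'h) set"
    and scE :: "complex \<Rightarrow> 'e::ab_group_add \<Rightarrow> 'e" and actE :: "'e \<Rightarrow> ('h \<Rightarrow> 'h) \<Rightarrow> 'e"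
    and ipE :: "'e \<Rightarrow> 'e \<Rightarrow> ('h \<Rightarrow> 'h)"
    and scF :: "complex \<Rightarrow> 'f::ab_group_add \<Rightarrow> 'f" and actF :: "'f \<Rightarrow> ('h \<Rightarrow> 'h) \<Rightarrow> 'f"
    and ipF :: "'f \<Rightarrow> 'f \<Rightarrow> ('h \<Rightarrow> 'h)"
    and \<delta> \<epsilon> :: real and \<eta> :: 'h
  assumes delta: "0 \<le> \<delta>" "\<delta> < 1" and eps: "0 \<le> \<epsilon>" "\<epsilon> < 1"
    and H: "complex_hilbert_space sc ip"
    and A: "cstar_algebra_between sc ip A"
    and E: "inner_product_module sc ip A scE actE ipE"
    and F: "inner_product_module sc ip A scF actF ipF"
    and unit: "ip \<eta> \<eta> = 1"
  shows "(\<forall>x\<in>cut_space actE (rank_one sc ip \<eta> \<eta>). \<forall>y\<in>cut_space actE (rank_one sc ip \<eta> \<eta>).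
            space_orth ip ipE \<delta> x y \<longleftrightarrow> module_orth ip ipE \<delta> x y)
       \<and> (\<forall>T :: 'e \<Rightarrow> 'f.
            (\<forall>x y. T (x + y) = T x + T y) \<and> (\<forall>c x. T (scE c x) = scF c (T x)) \<and>
            (\<forall>a\<in>A. \<forall>x. T (actE x a) = actF (T x) a) \<and>
            (\<forall>x y. module_orth ip ipE \<delta> x y \<longrightarrow> module_orth ip ipF \<epsilon> (T x) (T y))
          \<longrightarrow>
            T ` cut_space actE (rank_one sc ip \<eta> \<eta>) \<subseteq> cut_space actF (rank_one sc ip \<eta> \<eta>) \<and>
            (\<forall>x\<in>cut_space actE (rank_one sc ip \<eta> \<eta>). \<forall>y\<in>cut_space actE (rank_one sc ip \<eta> \<eta>).
               T (x + y) = T x + T y) \<and>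
            (\<forall>c. \<forall>x\<in>cut_space actE (rank_one sc ip \<eta> \<eta>). T (scE c x) = scF c (T x)) \<and>
            (\<forall>x\<in>cut_space actE (rank_one sc ip \<eta> \<eta>). \<forall>y\<in>cut_space actE (rank_one sc ip \<eta> \<eta>).
               space_orth ip ipE \<delta> x y \<longrightarrow> space_orth ip ipF \<epsilon> (T x) (T y)))"
proof -
  interpret hilbert_unit_vector sc ip \<eta>
    using H unit by (simp add: hilbert_unit_vector_def hilbert_unit_vector_axioms_def)
  note orth_E = space_orth_iff_module_orth[OF A E] and orth_F = space_orth_iff_module_orth[OF A F]
  have "T ` cut_space actE proj \<subseteq> cut_space actF proj"
    if "\<forall>a\<in>A. \<forall>x. T (actE x a) = actF (T x) a" for T :: "'e \<Rightarrow> 'f"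
    using that proj_in_algebra[OF A E] unfolding cut_space_def by auto
  with orth_E orth_F show ?thesis
    by (simp add: image_subset_iff)
qed

end
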